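(* Let $\alpha>0$ and let $\lambda$ be a partition of $n$ chosen from the Jack$_\alpha$ measure. \begin{enumerate} \item For every integer $m \geq 1$, $\mathbb{E}\left( \prod_{x\in\lambda} (m + c_\alpha(x)) \right) = m^n$. \item For $1 \leq r \leq n$, let $e_{r,\alpha}(\lambda)$ denote the $r$-th elementary symmetric function of the $n$ $\alpha$-contents $c_\alpha(x)$, $x\in\lambda$. Then $\mathbb{E}(e_{r,\alpha}(\lambda)) = 0$ for $1 \leq r \leq n$. \end{enumerate}
   Context: For $\alpha>0$, the Jack$_\alpha$ measure on partitions of $n$ chooses $\lambda$ with probability \[ \frac{\alpha^n n!}{\prod_{x\in\lambda}(\alpha a(x) + l(x) + 1)(\alpha a(x) + l(x) + \alpha)}, \] where $a(x)$ is the number of boxes in the same row as $x$ and to its right, and $l(x)$ is the number of boxes in the same column as $x$ and below it. The $\alpha$-content of a box $x$ is $c_\alpha(x) = \alpha(\text{column number of } x - 1) - (\text{row number of } x - 1)$. The $r$-th elementary symmetric function is $e_r(z_1,\dots,z_n)=\sum_{1\le i_1<\cdots<i_r\le n} z_{i_1}\cdots z_{i_r}$. *)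

theory Defs
  imports Complex_Main
begin

definition is_partition :: "nat list \<Rightarrow> bool" where
  "is_partition lam \<longleftrightarrow> (\<forall>i. Suc i < length lam \<longrightarrow> lam ! Suc i \<le> lam ! i) \<and> (\<forall>p\<in>set lam. 0 < p)"

definition partitions :: "nat \<Rightarrow> nat list set" where
  "partitions n = {lam. is_partition lam \<and> sum_list lam = n}"

text \<open>Boxes (i,j): row i, column j, both 0-indexed.\<close>
definition boxes :: "nat list \<Rightarrow> (nat \<times> nat) set" where
  "boxes lam = {(i, j). i < length lam \<and> j < lam ! i}"

definition arm :: "nat list \<Rightarrow> nat \<times> nat \<Rightarrow> nat" where
  "arm lam x = card {j'. (fst x, j') \<in> boxes lam \<and> snd x < j'}"

definition leg :: "nat list \<Rightarrow> nat \<times> nat \<Rightarrow> nat" where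
  "leg lam x = card {i'. (i', snd x) \<in> boxes lam \<and> fst x < i'}"

definition jack_prob :: "real \<Rightarrow> nat \<Rightarrow> nat list \<Rightarrow> real" where
  "jack_prob \<alpha> n lam = \<alpha> ^ n * fact n /
     (\<Prod>x\<in>boxes lam. (\<alpha> * arm lam x + leg lam x + 1) * (\<alpha> * arm lam x + leg lam x + \<alpha>))"

text \<open>alpha-content: alpha*(column-1) - (row-1) in 1-indexed terms.\<close>
definition content :: "real \<Rightarrow> nat \<times> nat \<Rightarrow> real" where
  "content \<alpha> x = \<alpha> * real (snd x) - real (fst x)"

definition jack_expect :: "real \<Rightarrow> nat \<Rightarrow> (nat list \<Rightarrow> real) \<Rightarrow> real" where
  "jack_expect \<alpha> n f = (\<Sum>lam\<in>partitions n. jack_prob \<alpha> n lam * f lam)"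

definition elem_content :: "real \<Rightarrow> nat \<Rightarrow> nat list \<Rightarrow> real" where
  "elem_content \<alpha> r lam = (\<Sum>S\<in>{S. S \<subseteq> boxes lam \<and> card S = r}. \<Prod>x\<in>S. content \<alpha> x)"

end

theory Submission
  imports Defs "HOL-Computational_Algebra.Polynomial"
begin

text \<open>
  Let z_k = alpha v_k - k be the content of the cell just past the end of row k of a partition v,
  padded to N rows with an empty last row, and weigh the ways of adding and removing a box by
    up(v, r) = prod_{k other than r} (z_r - z_k + 1) / (z_r - z_k) / (z_r + N),
    down(w, s) = (z_s + N - 1) * prod_{k other than s} (z_s - z_k - 1) / (z_s - z_k) / (alpha * |w|).
  Lagrange interpolation at the distinct nodes z_k shows that the up weights sum to 1 and have
  mean content sum_r up(v, r) * z_r = 0, and that the down weights sum to 1. Comparing the hook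
  products of v and of v plus a box at the end of row r gives the balance
  p_{n+1}(v + box) * down(v + box, r) = p_n(v) * up(v, r) for the Jack measures p_n. Inserting
  sum_s down(w, s) = 1 and regrouping the pairs (w, s) by v = w minus a box therefore gives
    E_{n+1} prod_x (u + c(x)) = sum_v p_n(v) * prod_{x in v} (u + c(x)) * sum_r up(v, r) * (u + z_r)
                              = u * E_n prod_x (u + c(x)),
  and the first claim follows by induction on n. The second follows by comparing coefficients
  in E_n prod_x (u + c(x)) = sum_k u^(n - k) * E_n e_k = u^n.
\<close>

hide_const (open) Polynomial.content

section \<open>Polynomials with prescribed roots and divided differences\<close>

definition root_poly :: "(nat \<Rightarrow> 'a::comm_ring_1) \<Rightarrow> nat set \<Rightarrow> 'a poly" where
  "root_poly a A = (\<Prod>k\<in>A. [:- a k, 1:])"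

lemma poly_root_poly: "poly (root_poly a A) x = (\<Prod>k\<in>A. x - a k)"
  by (simp add: root_poly_def poly_prod)

lemma degree_root_poly: "finite A \<Longrightarrow> degree (root_poly a A) = card A"
  for a :: "nat \<Rightarrow> 'a::idom"
  by (simp add: root_poly_def degree_prod_eq_sum_degree)

lemma coeff_root_poly_card: "finite A \<Longrightarrow> coeff (root_poly a A) (card A) = 1"
  for a :: "nat \<Rightarrow> 'a::idom"
  using lead_coeff_prod[of "\<lambda>k. [:- a k, 1:]" A] by (simp add: degree_root_poly root_poly_def [symmetric])

lemma root_poly_lessThan_Suc: "root_poly a {..<Suc m} = root_poly a {..<m} * [:- a m, 1:]"
  by (simp add: root_poly_def)

lemma coeff_mult_monic_linear: "coeff (p * [:c, 1:]) (Suc i) = c * coeff p (Suc i) + coeff p i"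
  for p :: "'a::comm_ring_1 poly"
  by (simp add: mult.commute[of p])

lemma coeff_root_poly_lessThan: "coeff (root_poly a {..<m}) m = 1"
  for a :: "nat \<Rightarrow> 'a::idom"
  using coeff_root_poly_card[of "{..<m}" a] by simp

lemma coeff_root_poly_sub1: "coeff (root_poly a {..<Suc m}) m = - (\<Sum>k<Suc m. a k)"
  for a :: "nat \<Rightarrow> 'a::idom"
proof (induction m)
  case 0
  then show ?case by (simp add: root_poly_def)
next
  case (Suc m)
  then show ?case
    by (simp add: root_poly_lessThan_Suc[of a "Suc m"] coeff_mult_monic_linear coeff_root_poly_lessThan)
qed

definition esym2 :: "(nat \<Rightarrow> 'a::comm_ring_1) \<Rightarrow> nat \<Rightarrow> 'a" where
  "esym2 a m = (\<Sum>j<m. \<Sum>i<j. a i * a j)"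

lemma esym2_Suc: "esym2 a (Suc m) = esym2 a m + a m * (\<Sum>i<m. a i)"
  by (simp add: esym2_def sum_distrib_left mult.commute)

lemma coeff_root_poly_sub2: "coeff (root_poly a {..<Suc (Suc m)}) m = esym2 a (Suc (Suc m))"
  for a :: "nat \<Rightarrow> 'a::idom"
proof (induction m)
  case 0
  then show ?case by (simp add: root_poly_def esym2_def)
next
  case (Suc m)
  then show ?case
    by (simp add: root_poly_lessThan_Suc[of a "Suc (Suc m)"] coeff_mult_monic_linear
        coeff_root_poly_sub1 esym2_Suc[of a "Suc (Suc m)"] algebra_simps)
qed

lemma esym2_shift:
  fixes a :: "nat \<Rightarrow> 'a::field_char_0"
  shows "esym2 (\<lambda>k. a k + 1) m - esym2 a m = (of_nat m - 1) * (\<Sum>k<m. a k) + of_nat m * (of_nat m - 1) / 2"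
proof (induction m)
  case 0
  then show ?case by (simp add: esym2_def)
next
  case (Suc m)
  have "esym2 (\<lambda>k. a k + 1) (Suc m) - esym2 a (Suc m)
      = (esym2 (\<lambda>k. a k + 1) m - esym2 a m) + (a m + 1) * ((\<Sum>i<m. a i) + of_nat m) - a m * (\<Sum>i<m. a i)"
    by (simp add: esym2_Suc sum.distrib)
  also have "\<dots> = (of_nat m - 1) * (\<Sum>k<m. a k) + of_nat m * (of_nat m - 1) / 2
      + (a m + 1) * ((\<Sum>i<m. a i) + of_nat m) - a m * (\<Sum>i<m. a i)"
    by (simp only: Suc)
  also have "\<dots> = (of_nat (Suc m) - 1) * (\<Sum>k<Suc m. a k) + of_nat (Suc m) * (of_nat (Suc m) - 1) / 2"
    by (simp add: field_simps)
  finally show ?case .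
qed

definition divided_diff :: "(nat \<Rightarrow> 'a::field) \<Rightarrow> nat \<Rightarrow> ('a \<Rightarrow> 'a) \<Rightarrow> 'a" where
  "divided_diff z N f = (\<Sum>r<N. f (z r) / (\<Prod>k\<in>{..<N}-{r}. z r - z k))"

lemma lagrange_interpolation:
  fixes z :: "nat \<Rightarrow> 'a::field"
  assumes inj: "inj_on z {..<N}" and deg: "degree p \<le> N"
  shows "p = (\<Sum>r<N. smult (poly p (z r) / (\<Prod>k\<in>{..<N}-{r}. z r - z k)) (root_poly z ({..<N}-{r})))
           + smult (coeff p N) (root_poly z {..<N})" (is "p = ?q")
proof (rule poly_eqI_degree_lead_coeff[where n = N and A = "z ` {..<N}"])
  have "coeff (root_poly z ({..<N}-{r})) N = 0" if "r < N" for r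
    using that by (simp add: coeff_eq_0 degree_root_poly)
  then show "coeff p N = coeff ?q N"
    by (simp add: coeff_sum coeff_root_poly_lessThan)
  show "card (z ` {..<N}) \<ge> N"
    using card_image[OF inj] by simp
  show "degree ?q \<le> N"
    by (intro degree_add_le degree_sum_le order.trans[OF degree_smult_le]) (auto simp: degree_root_poly)
next
  fix x assume "x \<in> z ` {..<N}"
  then obtain s where s: "s < N" and x: "x = z s" by auto
  have vanish: "poly (root_poly z A) (z s) = 0" if "s \<in> A" "finite A" for A
    using that by (auto simp: poly_root_poly intro!: prod_zero)
  have "(\<Sum>r\<in>{..<N}-{s}. poly p (z r) / (\<Prod>k\<in>{..<N}-{r}. z r - z k) * poly (root_poly z ({..<N}-{r})) (z s)) = 0"
    using s by (intro sum.neutral) (auto intro!: vanish)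
  moreover have "(\<Prod>k\<in>{..<N}-{s}. z s - z k) \<noteq> 0"
    using s inj by (auto simp: inj_on_def)
  ultimately show "poly p x = poly ?q x"
    using s by (auto simp: x poly_sum vanish sum.remove[of _ s] poly_root_poly)
qed (fact deg)

lemma divided_diff_poly:
  fixes z :: "nat \<Rightarrow> 'a::field"
  assumes inj: "inj_on z {..<N}" and "N \<ge> 1" and deg: "degree p \<le> N"
  shows "divided_diff z N (poly p) = coeff p (N - 1) + coeff p N * (\<Sum>k<N. z k)"
proof -
  obtain m where N: "N = Suc m"
    using \<open>N \<ge> 1\<close> by (cases N) auto
  have "coeff (root_poly z ({..<N}-{r})) m = 1" if "r < N" for r
    using coeff_root_poly_card[of "{..<N}-{r}" z] that N by simp
  moreover have "coeff (root_poly z {..<N}) m = - (\<Sum>k<N. z k)"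
    unfolding N by (rule coeff_root_poly_sub1)
  ultimately have "coeff p m = divided_diff z N (poly p) - coeff p N * (\<Sum>k<N. z k)"
    by (subst lagrange_interpolation[OF inj deg]) (simp add: coeff_sum divided_diff_def)
  then show ?thesis
    by (simp add: N)
qed

lemma root_poly_shift_diff:
  fixes z :: "nat \<Rightarrow> 'a::field_char_0" and m :: nat
  defines "Q \<equiv> root_poly z {..<Suc (Suc m)} - root_poly (\<lambda>k. z k + 1) {..<Suc (Suc m)}"
  shows "degree Q \<le> Suc m"
    and "coeff Q (Suc m) = of_nat (Suc (Suc m))"
    and "coeff Q m = - (of_nat (Suc m) * (\<Sum>k<Suc (Suc m). z k) + of_nat (Suc (Suc m)) * of_nat (Suc m) / 2)"
proof -
  have "coeff Q i = 0" if "i > Suc m" for i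
  proof (cases "i = Suc (Suc m)")
    case True
    then show ?thesis by (simp add: Q_def coeff_root_poly_lessThan)
  next
    case False
    with that have "i > Suc (Suc m)" by simp
    then show ?thesis by (simp add: Q_def coeff_eq_0 degree_root_poly)
  qed
  then show "degree Q \<le> Suc m"
    by (simp add: degree_le)
  show "coeff Q (Suc m) = of_nat (Suc (Suc m))"
    by (simp add: Q_def coeff_root_poly_sub1 sum.distrib)
  have "coeff Q m = - (esym2 (\<lambda>k. z k + 1) (Suc (Suc m)) - esym2 z (Suc (Suc m)))"
    by (simp add: Q_def coeff_root_poly_sub2)
  then show "coeff Q m = - (of_nat (Suc m) * (\<Sum>k<Suc (Suc m). z k) + of_nat (Suc (Suc m)) * of_nat (Suc m) / 2)"
    unfolding esym2_shift by simp
qed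

lemma divided_diff_shifted_prod:
  fixes z :: "nat \<Rightarrow> 'a::field_char_0"
  assumes inj: "inj_on z {..<N}" and "N \<ge> 2"
  shows "(\<Sum>s<N. (z s + of_nat N - 1) * (\<Prod>k\<in>{..<N}-{s}. z s - z k - 1) / (\<Prod>k\<in>{..<N}-{s}. z s - z k))
       = (\<Sum>k<N. z k) + of_nat N * (of_nat N - 1) / 2"
proof -
  define m where "m = N - 2"
  have N: "N = Suc (Suc m)"
    using \<open>N \<ge> 2\<close> by (simp add: m_def)
  define Q where "Q = root_poly z {..<N} - root_poly (\<lambda>k. z k + 1) {..<N}"
  define T where "T = Q * [:of_nat N - 1, 1:]"
  note Q = root_poly_shift_diff[of z m, folded N, folded Q_def]
  have numerator: "(z s + of_nat N - 1) * (\<Prod>k\<in>{..<N}-{s}. z s - z k - 1) = poly T (z s)" if "s < N" for s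
  proof -
    have vanish: "(\<Prod>k<N. z s - z k) = 0"
      using that by (intro prod_zero) auto
    have "(\<Prod>k<N. z s - (z k + 1)) = - (\<Prod>k\<in>{..<N}-{s}. z s - z k - 1)"
      using that prod.remove[of "{..<N}" s "\<lambda>k. z s - (z k + 1)"] by (simp add: algebra_simps)
    then show ?thesis
      unfolding T_def Q_def poly_mult poly_diff poly_root_poly vanish by (simp add: algebra_simps)
  qed
  have "degree T \<le> degree Q + degree [:of_nat N - 1, 1::'a:]"
    unfolding T_def by (rule degree_mult_le)
  then have "degree T \<le> N"
    using Q(1) by (simp add: N)
  then have "divided_diff z N (poly T) = coeff T (Suc m) + coeff T N * (\<Sum>k<N. z k)"
    using divided_diff_poly[OF inj, of T] by (simp add: N)
  also have "\<dots> = (\<Sum>k<N. z k) + of_nat N * (of_nat N - 1) / 2"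
    using Q(2,3) by (simp add: T_def N coeff_mult_monic_linear coeff_eq_0[OF le_less_trans[OF Q(1)]] field_simps)
  finally show ?thesis
    by (simp add: divided_diff_def numerator)
qed

section \<open>Young diagrams and hook products\<close>

lemma sorted_desc_nth_le:
  fixes v :: "'a::order list"
  assumes "sorted_wrt (\<ge>) v" "i \<le> j" "j < length v"
  shows "v ! j \<le> v ! i"
proof (cases "i = j")
  case False
  then show ?thesis
    using sorted_wrt_nth_less[OF assms(1)] assms(2,3) by simp
qed simp

lemma sorted_desc_iff_nth_Suc:
  "sorted_wrt (\<ge>) (v :: 'a::order list) \<longleftrightarrow> (\<forall>i. Suc i < length v \<longrightarrow> v ! Suc i \<le> v ! i)"
  by (rule sorted_wrt_iff_nth_Suc_transp) (auto simp: transp_def)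

lemma last_row_zero:
  assumes "sorted_wrt (\<ge>) w" "length w = Suc p" "sum_list w < Suc p"
  shows "w ! p = 0"
proof (rule ccontr)
  assume "w ! p \<noteq> 0"
  then have "1 \<le> w ! k" if "k < length w" for k
    using that assms(2) sorted_desc_nth_le[OF assms(1), of k p] by simp
  then have "(\<Sum>k<length w. 1) \<le> (\<Sum>k<length w. w ! k)"
    by (intro sum_mono) auto
  then show False
    using assms(2,3) by (simp add: sum_list_sum_nth atLeast0LessThan)
qed

lemma finite_boxes: "finite (boxes v)"
proof (rule finite_subset)
  show "boxes v \<subseteq> {..<length v} \<times> {..<Suc (sum_list v)}"
    using elem_le_sum_list[of _ v] by (fastforce simp: boxes_def)
qed auto

lemma boxes_Cons: "boxes (a # \<mu>) = (\<lambda>j. (0, j)) ` {..<a} \<union> (\<lambda>(i, j). (Suc i, j)) ` boxes \<mu>"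
  by (auto simp: boxes_def image_iff nth_Cons split: nat.splits)

lemma card_boxes: "card (boxes v) = sum_list v"
proof (induction v)
  case Nil
  then show ?case by (simp add: boxes_def)
next
  case (Cons a \<mu>)
  have "inj_on (\<lambda>(i, j). (Suc i, j)) (boxes \<mu>)"
    by (auto simp: inj_on_def)
  moreover have "(\<lambda>j. (0, j)) ` {..<a} \<inter> (\<lambda>(i, j). (Suc i, j)) ` boxes \<mu> = {}"
    by auto
  ultimately show ?case
    by (simp add: boxes_Cons card_Un_disjoint finite_boxes card_image inj_on_def Cons.IH)
qed

definition col_length :: "nat list \<Rightarrow> nat \<Rightarrow> nat" where
  "col_length \<mu> j = card {k. k < length \<mu> \<and> j < \<mu> ! k}"

lemma arm_Cons_0: "j < a \<Longrightarrow> arm (a # \<mu>) (0, j) = a - 1 - j"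
proof -
  assume "j < a"
  then have "{j'. (0, j') \<in> boxes (a # \<mu>) \<and> j < j'} = {Suc j..<a}"
    by (auto simp: boxes_def)
  then show ?thesis by (simp add: arm_def)
qed

lemma leg_Cons_0: "leg (a # \<mu>) (0, j) = col_length \<mu> j"
proof -
  have "{i'. (i', j) \<in> boxes (a # \<mu>) \<and> 0 < i'} = Suc ` {k. k < length \<mu> \<and> j < \<mu> ! k}"
    by (auto simp: boxes_def image_iff gr0_conv_Suc)
  then show ?thesis by (simp add: leg_def col_length_def card_image)
qed

lemma arm_Cons_Suc: "arm (a # \<mu>) (Suc i, j) = arm \<mu> (i, j)"
  by (simp add: arm_def boxes_def)

lemma leg_Cons_Suc: "leg (a # \<mu>) (Suc i, j) = leg \<mu> (i, j)"
proof -
  have "{i'. (i', j) \<in> boxes (a # \<mu>) \<and> Suc i < i'} = Suc ` {i'. (i', j) \<in> boxes \<mu> \<and> i < i'}"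
    by (auto simp: boxes_def image_iff Suc_less_eq2)
  then show ?thesis by (simp add: leg_def card_image)
qed

definition hook_prod :: "real \<Rightarrow> real \<Rightarrow> nat list \<Rightarrow> real" where
  "hook_prod \<alpha> c v = (\<Prod>x\<in>boxes v. \<alpha> * real (arm v x) + real (leg v x) + c)"

definition top_row_hook_prod :: "real \<Rightarrow> real \<Rightarrow> nat \<Rightarrow> nat list \<Rightarrow> real" where
  "top_row_hook_prod \<alpha> c a \<mu> = (\<Prod>j<a. \<alpha> * real (a - 1 - j) + real (col_length \<mu> j) + c)"

lemma jack_prob_eq_hook_prod: "jack_prob \<alpha> n v = \<alpha> ^ n * fact n / (hook_prod \<alpha> 1 v * hook_prod \<alpha> \<alpha> v)"
  by (simp add: jack_prob_def hook_prod_def prod.distrib)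

lemma hook_prod_pos: "\<alpha> > 0 \<Longrightarrow> c > 0 \<Longrightarrow> hook_prod \<alpha> c v > 0"
  unfolding hook_prod_def by (intro prod_pos) (auto intro: add_nonneg_pos)

lemma top_row_hook_prod_pos: "\<alpha> > 0 \<Longrightarrow> c > 0 \<Longrightarrow> top_row_hook_prod \<alpha> c a \<mu> > 0"
  unfolding top_row_hook_prod_def by (intro prod_pos) (auto intro: add_nonneg_pos)

lemma hook_prod_Cons: "hook_prod \<alpha> c (a # \<mu>) = top_row_hook_prod \<alpha> c a \<mu> * hook_prod \<alpha> c \<mu>"
proof -
  have top: "inj_on (\<lambda>j. (0::nat, j)) {..<a}" and rest: "inj_on (\<lambda>(i, j). (Suc i, j)) (boxes \<mu>)"
    by (auto simp: inj_on_def)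
  have disjoint: "(\<lambda>j. (0, j)) ` {..<a} \<inter> (\<lambda>(i, j). (Suc i, j)) ` boxes \<mu> = {}"
    by auto
  have "hook_prod \<alpha> c (a # \<mu>)
      = (\<Prod>j<a. \<alpha> * real (arm (a # \<mu>) (0, j)) + real (leg (a # \<mu>) (0, j)) + c)
      * (\<Prod>(i, j)\<in>boxes \<mu>. \<alpha> * real (arm (a # \<mu>) (Suc i, j)) + real (leg (a # \<mu>) (Suc i, j)) + c)"
    unfolding hook_prod_def boxes_Cons
    by (simp only: prod.union_disjoint[OF _ _ disjoint] finite_imageI finite_boxes finite_lessThan
        prod.reindex[OF top] prod.reindex[OF rest]) (simp add: case_prod_unfold)
  then show ?thesis
    by (simp add: hook_prod_def top_row_hook_prod_def arm_Cons_0 leg_Cons_0 arm_Cons_Suc leg_Cons_Suc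
        case_prod_unfold)
qed

lemma prod_lessThan_telescope:
  fixes f :: "nat \<Rightarrow> 'a::comm_monoid_mult"
  assumes "b \<le> a"
  shows "(\<Prod>j<b. f (a - j)) * f (a - b) = f a * (\<Prod>j<b. f (a - 1 - j))"
  using assms
proof (induction b)
  case 0
  then show ?case by simp
next
  case (Suc b)
  then have "(\<Prod>j<Suc b. f (a - j)) * f (a - Suc b) = f a * (\<Prod>j<b. f (a - 1 - j)) * f (a - Suc b)"
    by (simp add: mult_ac)
  then show ?case
    by (simp add: mult_ac)
qed

lemma col_length_snoc: "col_length (\<nu> @ [b]) j = col_length \<nu> j + (if j < b then 1 else 0)"
proof -
  have "{k. k < length (\<nu> @ [b]) \<and> j < (\<nu> @ [b]) ! k}
      = {k. k < length \<nu> \<and> j < \<nu> ! k} \<union> (if j < b then {length \<nu>} else {})"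
    by (auto simp: nth_append less_Suc_eq)
  then show ?thesis by (simp add: col_length_def)
qed

lemma col_length_eq_length:
  assumes "\<forall>k<length \<nu>. b \<le> \<nu> ! k" "j < b"
  shows "col_length \<nu> j = length \<nu>"
proof -
  have "{k. k < length \<nu> \<and> j < \<nu> ! k} = {..<length \<nu>}"
    using assms by force
  then show ?thesis by (simp add: col_length_def)
qed

lemma top_row_hook_prod_snoc:
  assumes "\<forall>k<length \<nu>. b \<le> \<nu> ! k" "b \<le> a" "\<alpha> > 0" "c > 0"
  shows "top_row_hook_prod \<alpha> c a (\<nu> @ [b]) = top_row_hook_prod \<alpha> c a \<nu> *
    (\<Prod>j<b. (\<alpha> * real (a - 1 - j) + real (length \<nu>) + 1 + c) / (\<alpha> * real (a - 1 - j) + real (length \<nu>) + c))"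
proof -
  define h where "h l j = \<alpha> * real (a - 1 - j) + real l + c" for l j
  have nonzero: "h l j \<noteq> 0" for l j
    using assms(3,4) add_nonneg_pos[of "\<alpha> * real (a - 1 - j) + real l" c] by (auto simp: h_def)
  have interval: "{..<a} = {..<b} \<union> {b..<a}"
    using assms(2) by auto
  have split: "top_row_hook_prod \<alpha> c a \<mu> = (\<Prod>j<b. h (col_length \<mu> j) j) * (\<Prod>j\<in>{b..<a}. h (col_length \<mu> j) j)"
    for \<mu>
    unfolding top_row_hook_prod_def h_def interval by (rule prod.union_disjoint) auto
  have new: "(\<Prod>j<b. h (col_length (\<nu> @ [b]) j) j) = (\<Prod>j<b. h (Suc (length \<nu>)) j)"
    and old: "(\<Prod>j<b. h (col_length \<nu> j) j) = (\<Prod>j<b. h (length \<nu>) j)"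
    and high: "(\<Prod>j\<in>{b..<a}. h (col_length (\<nu> @ [b]) j) j) = (\<Prod>j\<in>{b..<a}. h (col_length \<nu> j) j)"
    by (auto intro!: prod.cong simp: col_length_snoc col_length_eq_length[OF assms(1)])
  have "(\<Prod>j<b. h (Suc (length \<nu>)) j) = (\<Prod>j<b. h (length \<nu>) j * (h (Suc (length \<nu>)) j / h (length \<nu>) j))"
    by (simp add: nonzero)
  then have "top_row_hook_prod \<alpha> c a (\<nu> @ [b])
      = top_row_hook_prod \<alpha> c a \<nu> * (\<Prod>j<b. h (Suc (length \<nu>)) j / h (length \<nu>) j)"
    by (simp only: split new old high prod.distrib mult_ac)
  then show ?thesis
    by (simp add: h_def add_ac)
qed

lemma top_row_hook_prod_Suc_snoc:
  assumes "\<forall>k<length \<nu>. b \<le> \<nu> ! k" "b \<le> a" "\<alpha> > 0" "c > 0"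
  defines "G \<equiv> \<lambda>t. (\<alpha> * real t + real (length \<nu>) + 1 + c) / (\<alpha> * real t + real (length \<nu>) + c)"
  shows "top_row_hook_prod \<alpha> c (Suc a) (\<nu> @ [b]) * top_row_hook_prod \<alpha> c a \<nu> * G (a - b)
       = top_row_hook_prod \<alpha> c (Suc a) \<nu> * top_row_hook_prod \<alpha> c a (\<nu> @ [b]) * G a"
proof -
  have snoc: "top_row_hook_prod \<alpha> c a (\<nu> @ [b]) = top_row_hook_prod \<alpha> c a \<nu> * (\<Prod>j<b. G (a - 1 - j))"
    using top_row_hook_prod_snoc[OF assms(1,2,3,4)] by (simp add: G_def)
  have snoc_Suc: "top_row_hook_prod \<alpha> c (Suc a) (\<nu> @ [b]) = top_row_hook_prod \<alpha> c (Suc a) \<nu> * (\<Prod>j<b. G (a - j))"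
    using top_row_hook_prod_snoc[OF assms(1) le_SucI[OF assms(2)] assms(3,4)] by (simp add: G_def)
  have "top_row_hook_prod \<alpha> c (Suc a) (\<nu> @ [b]) * top_row_hook_prod \<alpha> c a \<nu> * G (a - b)
      = top_row_hook_prod \<alpha> c (Suc a) \<nu> * top_row_hook_prod \<alpha> c a \<nu> * ((\<Prod>j<b. G (a - j)) * G (a - b))"
    by (simp add: snoc_Suc mult_ac)
  also have "(\<Prod>j<b. G (a - j)) * G (a - b) = G a * (\<Prod>j<b. G (a - 1 - j))"
    using assms(2) by (rule prod_lessThan_telescope)
  finally show ?thesis
    by (simp add: snoc mult_ac)
qed

lemma top_row_hook_prod_Suc:
  assumes "sorted_wrt (\<ge>) \<mu>" "\<forall>k<length \<mu>. \<mu> ! k \<le> a" "\<alpha> > 0" "c > 0"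
  shows "top_row_hook_prod \<alpha> c (Suc a) \<mu> = top_row_hook_prod \<alpha> c a \<mu> * (\<alpha> * real a + real (length \<mu>) + c) *
    (\<Prod>k<length \<mu>. (\<alpha> * real (a - \<mu> ! k) + real k + c) / (\<alpha> * real (a - \<mu> ! k) + real k + 1 + c))"
  using assms(1,2)
proof (induction \<mu> rule: rev_induct)
  case Nil
  then show ?case
    by (simp add: top_row_hook_prod_def col_length_def prod.lessThan_Suc_shift del: prod.lessThan_Suc)
next
  case (snoc b \<nu>)
  define L where "L = length \<nu>"
  have below: "\<forall>k<length \<nu>. b \<le> \<nu> ! k" and "b \<le> a"
    using snoc.prems by (auto simp: sorted_wrt_append nth_append dest: spec[of _ "length \<nu>"])
  have "\<forall>k<length \<nu>. \<nu> ! k \<le> a"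
    using snoc.prems(2) by (metis length_append_singleton less_SucI nth_append)
  then have IH: "top_row_hook_prod \<alpha> c (Suc a) \<nu> = top_row_hook_prod \<alpha> c a \<nu> * (\<alpha> * real a + real L + c) *
    (\<Prod>k<L. (\<alpha> * real (a - \<nu> ! k) + real k + c) / (\<alpha> * real (a - \<nu> ! k) + real k + 1 + c))"
    using snoc.IH snoc.prems(1) by (simp add: L_def sorted_wrt_append)
  have pos: "\<alpha> * real t + real L + c > 0" "\<alpha> * real t + real L + 1 + c > 0" for t
    using assms(3,4) by (simp_all add: add_nonneg_pos add_pos_nonneg)
  have field: "S' = T' * h1 * (P * (h0' / h1'))"
    if "S' * T * (h1' / h0') = T * h0 * P * T' * (h1 / h0)" "T > 0" "h0 > 0" "h0' > 0" "h1' > 0"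
    for S' T T' P h0 h1 h0' h1' :: real
    using that by (simp add: field_simps)
  have key: "top_row_hook_prod \<alpha> c (Suc a) (\<nu> @ [b]) * top_row_hook_prod \<alpha> c a \<nu>
      * ((\<alpha> * real (a - b) + real L + 1 + c) / (\<alpha> * real (a - b) + real L + c))
    = top_row_hook_prod \<alpha> c (Suc a) \<nu> * top_row_hook_prod \<alpha> c a (\<nu> @ [b])
      * ((\<alpha> * real a + real L + 1 + c) / (\<alpha> * real a + real L + c))"
    using top_row_hook_prod_Suc_snoc[OF below \<open>b \<le> a\<close> assms(3,4)] by (simp add: L_def)
  have last: "(\<Prod>k<length (\<nu> @ [b]). (\<alpha> * real (a - (\<nu> @ [b]) ! k) + real k + c) / (\<alpha> * real (a - (\<nu> @ [b]) ! k) + real k + 1 + c))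
      = (\<Prod>k<L. (\<alpha> * real (a - \<nu> ! k) + real k + c) / (\<alpha> * real (a - \<nu> ! k) + real k + 1 + c))
        * ((\<alpha> * real (a - b) + real L + c) / (\<alpha> * real (a - b) + real L + 1 + c))"
    and length_snoc: "\<alpha> * real a + real (length (\<nu> @ [b])) + c = \<alpha> * real a + real L + 1 + c"
    by (simp_all add: L_def nth_append)
  show ?case
    unfolding last length_snoc using key unfolding IH
    by (intro field) (use pos top_row_hook_prod_pos[OF assms(3,4)] in auto)
qed

abbreviation add_box :: "nat list \<Rightarrow> nat \<Rightarrow> nat list" where
  "add_box v r \<equiv> v[r := Suc (v ! r)]"

definition addable :: "nat list \<Rightarrow> nat \<Rightarrow> bool" where
  "addable v r \<longleftrightarrow> r < length v \<and> (r = 0 \<or> v ! r < v ! (r - 1))"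

definition removable :: "nat list \<Rightarrow> nat \<Rightarrow> bool" where
  "removable w s \<longleftrightarrow> Suc s < length w \<and> w ! Suc s < w ! s"

lemma col_length_add_box:
  "r < length \<mu> \<Longrightarrow> col_length (add_box \<mu> r) j = col_length \<mu> j + (if j = \<mu> ! r then 1 else 0)"
proof -
  assume r: "r < length \<mu>"
  have "{k. k < length \<mu> \<and> j < add_box \<mu> r ! k}
      = {k. k < length \<mu> \<and> j < \<mu> ! k} \<union> (if j = \<mu> ! r then {r} else {})"
    using r by (auto simp: nth_list_update split: if_splits)
  then show ?thesis by (simp add: col_length_def)
qed

lemma col_length_addable:
  assumes "sorted_wrt (\<ge>) \<mu>" "addable \<mu> r"
  shows "col_length \<mu> (\<mu> ! r) = r"
proof -
  have "k < r" if "k < length \<mu>" "\<mu> ! r < \<mu> ! k" for k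
    using that sorted_desc_nth_le[OF assms(1), of r k] by (cases "r \<le> k") auto
  moreover have "\<mu> ! r < \<mu> ! k" if "k < r" for k
  proof -
    have "\<mu> ! (r - 1) \<le> \<mu> ! k"
      using that assms(2) by (intro sorted_desc_nth_le[OF assms(1)]) (auto simp: addable_def)
    then show ?thesis
      using that assms(2) by (auto simp: addable_def)
  qed
  ultimately have "{k. k < length \<mu> \<and> \<mu> ! r < \<mu> ! k} = {..<r}"
    using assms(2) by (auto simp: addable_def)
  then show ?thesis by (simp add: col_length_def)
qed

lemma top_row_hook_prod_add_box:
  assumes "sorted_wrt (\<ge>) \<mu>" "addable \<mu> r" "\<mu> ! r < a"
  shows "top_row_hook_prod \<alpha> c a (add_box \<mu> r) * (\<alpha> * real (a - 1 - \<mu> ! r) + real r + c)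
       = top_row_hook_prod \<alpha> c a \<mu> * (\<alpha> * real (a - 1 - \<mu> ! r) + real r + 1 + c)"
proof -
  define h where "h \<nu> j = \<alpha> * real (a - 1 - j) + real (col_length \<nu> j) + c" for \<nu> j
  have r: "r < length \<mu>"
    using assms(2) by (simp add: addable_def)
  have "top_row_hook_prod \<alpha> c a \<nu> = h \<nu> (\<mu> ! r) * (\<Prod>j\<in>{..<a}-{\<mu> ! r}. h \<nu> j)" for \<nu>
    unfolding top_row_hook_prod_def h_def using assms(3) by (intro prod.remove) auto
  moreover have "(\<Prod>j\<in>{..<a}-{\<mu> ! r}. h (add_box \<mu> r) j) = (\<Prod>j\<in>{..<a}-{\<mu> ! r}. h \<mu> j)"
    by (intro prod.cong) (auto simp: h_def col_length_add_box[OF r])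
  ultimately show ?thesis
    using col_length_addable[OF assms(1,2)] by (simp add: h_def col_length_add_box[OF r] algebra_simps)
qed

(* The content of the cell (k, v ! k) created by add_box v k. *)
definition end_content :: "real \<Rightarrow> nat list \<Rightarrow> nat \<Rightarrow> real" where
  "end_content \<alpha> v k = \<alpha> * real (v ! k) - real k"

(* The factor for k < r comes from the hook in row k through the new column; the factors for
   k > r come from telescoping the hooks of row r. *)
definition hook_ratio_factor :: "real \<Rightarrow> real \<Rightarrow> nat list \<Rightarrow> nat \<Rightarrow> nat \<Rightarrow> real" where
  "hook_ratio_factor \<alpha> c v r k =
    (let d = end_content \<alpha> v r - end_content \<alpha> v k
     in if k < r then (d + \<alpha> - c) / (d + \<alpha> + 1 - c) else if r < k then (d + c - 1) / (d + c) else 1)"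

definition hook_ratio :: "real \<Rightarrow> real \<Rightarrow> nat list \<Rightarrow> nat \<Rightarrow> real" where
  "hook_ratio \<alpha> c v r =
    (end_content \<alpha> v r + real (length v) - 1 + c) * (\<Prod>k<length v. hook_ratio_factor \<alpha> c v r k)"

lemma addable_Cons_Suc:
  assumes "sorted_wrt (\<ge>) (a # \<mu>)" "addable (a # \<mu>) (Suc r)"
  shows "addable \<mu> r" "\<mu> ! r < a"
proof -
  show "addable \<mu> r"
    using assms(2) by (cases r) (auto simp: addable_def)
  show "\<mu> ! r < a"
  proof (cases r)
    case (Suc r')
    then have "\<mu> ! r < \<mu> ! r'" "r' < length \<mu>"
      using \<open>addable \<mu> r\<close> by (auto simp: addable_def)
    then show ?thesis
      using assms(1) by (auto dest!: nth_mem intro: order.strict_trans2)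
  qed (use assms(2) in \<open>simp add: addable_def\<close>)
qed

lemma hook_ratio_Cons_0:
  assumes "\<forall>k<length \<mu>. \<mu> ! k \<le> a"
  shows "hook_ratio \<alpha> c (a # \<mu>) 0 = (\<alpha> * real a + real (length \<mu>) + c) *
    (\<Prod>k<length \<mu>. (\<alpha> * real (a - \<mu> ! k) + real k + c) / (\<alpha> * real (a - \<mu> ! k) + real k + 1 + c))"
proof -
  have "hook_ratio_factor \<alpha> c (a # \<mu>) 0 (Suc k)
      = (\<alpha> * real (a - \<mu> ! k) + real k + c) / (\<alpha> * real (a - \<mu> ! k) + real k + 1 + c)"
    if "k < length \<mu>" for k
    using assms that by (simp add: hook_ratio_factor_def end_content_def of_nat_diff algebra_simps)
  then show ?thesis
    by (simp add: hook_ratio_def prod.lessThan_Suc_shift hook_ratio_factor_def end_content_def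
        del: prod.lessThan_Suc)
qed

lemma hook_ratio_Cons_Suc:
  assumes "\<mu> ! r < a" "A = \<alpha> * real (a - 1 - \<mu> ! r) + real r + c" "A \<noteq> 0"
  shows "hook_ratio \<alpha> c (a # \<mu>) (Suc r) = hook_ratio \<alpha> c \<mu> r * ((A + 1) / A)"
proof -
  define d where "d = end_content \<alpha> (a # \<mu>) (Suc r) - end_content \<alpha> (a # \<mu>) 0"
  have "d + \<alpha> - c = - (A + 1)" "d + \<alpha> + 1 - c = - A"
    using assms(1,2) by (simp_all add: d_def end_content_def of_nat_diff algebra_simps)
  then have "hook_ratio_factor \<alpha> c (a # \<mu>) (Suc r) 0 = (A + 1) / A"
    using assms(3) by (simp add: hook_ratio_factor_def field_simps flip: d_def)
  moreover have "hook_ratio_factor \<alpha> c (a # \<mu>) (Suc r) (Suc k) = hook_ratio_factor \<alpha> c \<mu> r k" for k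
    by (simp add: hook_ratio_factor_def end_content_def Let_def algebra_simps)
  ultimately show ?thesis
    by (simp add: hook_ratio_def prod.lessThan_Suc_shift end_content_def del: prod.lessThan_Suc)
qed

lemma hook_prod_add_box:
  assumes "sorted_wrt (\<ge>) v" "addable v r" "\<alpha> > 0" "c > 0"
  shows "hook_prod \<alpha> c (add_box v r) = hook_prod \<alpha> c v * hook_ratio \<alpha> c v r"
  using assms(1,2)
proof (induction v arbitrary: r)
  case Nil
  then show ?case by (simp add: addable_def)
next
  case (Cons a \<mu>)
  have sorted: "sorted_wrt (\<ge>) \<mu>" and below: "\<forall>k<length \<mu>. \<mu> ! k \<le> a"
    using Cons.prems(1) by auto
  show ?case
  proof (cases r)
    case 0
    then show ?thesis
      using top_row_hook_prod_Suc[OF sorted below assms(3,4)] hook_ratio_Cons_0[OF below]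
      by (simp add: hook_prod_Cons mult_ac)
  next
    case (Suc r')
    have addable': "addable \<mu> r'" and short: "\<mu> ! r' < a"
      using addable_Cons_Suc[OF Cons.prems(1)] Cons.prems(2) Suc by auto
    define A where "A = \<alpha> * real (a - 1 - \<mu> ! r') + real r' + c"
    have "A > 0"
      unfolding A_def using assms(3,4) by (intro add_nonneg_pos) auto
    then have "top_row_hook_prod \<alpha> c a (add_box \<mu> r') = top_row_hook_prod \<alpha> c a \<mu> * ((A + 1) / A)"
      using top_row_hook_prod_add_box[OF sorted addable' short, of \<alpha> c] by (simp add: A_def field_simps)
    then show ?thesis
      using Suc Cons.IH[OF sorted addable'] hook_ratio_Cons_Suc[OF short A_def] \<open>A > 0\<close>
      by (simp add: hook_prod_Cons mult_ac)
  qed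
qed

section \<open>Transition weights\<close>

lemma end_content_below_gap:
  assumes "sorted_wrt (\<ge>) v" "r < k" "k < length v" "\<alpha> > 0"
  shows "end_content \<alpha> v r - end_content \<alpha> v k \<ge> 1"
proof -
  have "\<alpha> * real (v ! k) \<le> \<alpha> * real (v ! r)"
    using sorted_desc_nth_le[OF assms(1)] assms(2-4) by simp
  then show ?thesis
    using assms(2) by (simp add: end_content_def)
qed

lemma end_content_above_gap:
  assumes "sorted_wrt (\<ge>) v" "addable v r" "k < r" "\<alpha> > 0"
  shows "end_content \<alpha> v r - end_content \<alpha> v k \<le> - \<alpha> - 1"
proof -
  have "v ! r < v ! (r - 1)" "v ! (r - 1) \<le> v ! k"
    using assms by (auto simp: addable_def intro: sorted_desc_nth_le)
  then have "\<alpha> * real (Suc (v ! r)) \<le> \<alpha> * real (v ! k)"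
    using assms(4) by simp
  then show ?thesis
    using assms(3) by (simp add: end_content_def algebra_simps)
qed

lemma inj_on_end_content:
  assumes "sorted_wrt (\<ge>) v" "\<alpha> > 0"
  shows "inj_on (end_content \<alpha> v) {..<length v}"
proof (rule inj_onI)
  fix k r assume "k \<in> {..<length v}" "r \<in> {..<length v}" "end_content \<alpha> v k = end_content \<alpha> v r"
  then show "k = r"
    using end_content_below_gap[OF assms(1) _ _ assms(2), of k r] end_content_below_gap[OF assms(1) _ _ assms(2), of r k]
    by (cases k r rule: linorder_cases) auto
qed

lemma hook_ratio_pos:
  assumes "sorted_wrt (\<ge>) v" "addable v r" "\<alpha> > 0" "c > 0"
  shows "hook_ratio \<alpha> c v r > 0"
  using hook_prod_add_box[OF assms] hook_prod_pos[OF assms(3,4), of v] hook_prod_pos[OF assms(3,4), of "add_box v r"]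
  by (simp add: zero_less_mult_iff)

lemma hook_ratio_eq_prod_other_rows:
  assumes "r < length v"
  shows "hook_ratio \<alpha> c v r = (end_content \<alpha> v r + real (length v) - 1 + c)
    * (\<Prod>k\<in>{..<length v}-{r}. hook_ratio_factor \<alpha> c v r k)"
  using assms prod.remove[of "{..<length v}" r "hook_ratio_factor \<alpha> c v r"]
  by (simp add: hook_ratio_def hook_ratio_factor_def)

lemma hook_ratio_factor_mult:
  assumes "k \<noteq> r" "d = end_content \<alpha> v r - end_content \<alpha> v k" "d \<noteq> 0" "d + 1 \<noteq> 0"
  shows "hook_ratio_factor \<alpha> 1 v r k * hook_ratio_factor \<alpha> \<alpha> v r k * ((d + 1) / d) = (d + \<alpha> - 1) / (d + \<alpha>)"
proof -
  have "hook_ratio_factor \<alpha> 1 v r k * hook_ratio_factor \<alpha> \<alpha> v r k = (d + \<alpha> - 1) / (d + \<alpha>) * (d / (d + 1))"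
    using assms(1) unfolding hook_ratio_factor_def Let_def assms(2)[symmetric] by (auto simp: mult.commute)
  moreover have "d / (d + 1) * ((d + 1) / d) = 1"
    using assms(3,4) by simp
  ultimately show ?thesis
    by (metis mult.assoc mult.right_neutral)
qed

definition up_weight :: "real \<Rightarrow> nat list \<Rightarrow> nat \<Rightarrow> real" where
  "up_weight \<alpha> v r =
    (\<Prod>k\<in>{..<length v}-{r}. (end_content \<alpha> v r - end_content \<alpha> v k + 1) / (end_content \<alpha> v r - end_content \<alpha> v k))
    / (end_content \<alpha> v r + real (length v))"

definition down_weight :: "real \<Rightarrow> nat list \<Rightarrow> nat \<Rightarrow> real" where
  "down_weight \<alpha> w s =
    (end_content \<alpha> w s + real (length w) - 1)
    * (\<Prod>k\<in>{..<length w}-{s}. (end_content \<alpha> w s - end_content \<alpha> w k - 1) / (end_content \<alpha> w s - end_content \<alpha> w k))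
    / (\<alpha> * real (sum_list w))"

lemma down_weight_add_box:
  assumes "r < length v"
  shows "down_weight \<alpha> (add_box v r) r = (end_content \<alpha> v r + real (length v) - 1 + \<alpha>)
    * (\<Prod>k\<in>{..<length v}-{r}. (end_content \<alpha> v r - end_content \<alpha> v k + \<alpha> - 1)
                                  / (end_content \<alpha> v r - end_content \<alpha> v k + \<alpha>))
    / (\<alpha> * real (Suc (sum_list v)))"
proof -
  have new: "end_content \<alpha> (add_box v r) k = (if k = r then end_content \<alpha> v r + \<alpha> else end_content \<alpha> v k)" for k
    using assms by (simp add: end_content_def algebra_simps)
  have "(\<Prod>k\<in>{..<length v}-{r}. (end_content \<alpha> (add_box v r) r - end_content \<alpha> (add_box v r) k - 1)
      / (end_content \<alpha> (add_box v r) r - end_content \<alpha> (add_box v r) k))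
    = (\<Prod>k\<in>{..<length v}-{r}. (end_content \<alpha> v r - end_content \<alpha> v k + \<alpha> - 1)
      / (end_content \<alpha> v r - end_content \<alpha> v k + \<alpha>))"
    by (intro prod.cong) (auto simp: new algebra_simps)
  then show ?thesis
    using assms by (simp add: down_weight_def new sum_list_update algebra_simps)
qed

lemma prod_hook_ratio_factors:
  assumes sorted: "sorted_wrt (\<ge>) v" and addable: "addable v r" and "\<alpha> > 0"
  defines "d \<equiv> \<lambda>k. end_content \<alpha> v r - end_content \<alpha> v k"
  shows "(\<Prod>k\<in>{..<length v}-{r}. (d k + \<alpha> - 1) / (d k + \<alpha>))
       = (\<Prod>k\<in>{..<length v}-{r}. hook_ratio_factor \<alpha> 1 v r k) * (\<Prod>k\<in>{..<length v}-{r}. hook_ratio_factor \<alpha> \<alpha> v r k)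
         * (\<Prod>k\<in>{..<length v}-{r}. (d k + 1) / d k)"
  unfolding prod.distrib[symmetric]
proof (rule prod.cong[OF refl])
  fix k assume "k \<in> {..<length v}-{r}"
  then have "d k \<ge> 1 \<or> d k \<le> - \<alpha> - 1" "k \<noteq> r"
    using end_content_below_gap[OF sorted, of r k] end_content_above_gap[OF sorted addable, of k] \<open>\<alpha> > 0\<close>
    by (cases "r < k"; auto simp: d_def)+
  then show "(d k + \<alpha> - 1) / (d k + \<alpha>) = hook_ratio_factor \<alpha> 1 v r k * hook_ratio_factor \<alpha> \<alpha> v r k * ((d k + 1) / d k)"
    using \<open>\<alpha> > 0\<close> by (intro hook_ratio_factor_mult[symmetric]) (auto simp: d_def)
qed

lemma jack_prob_add_box_down_weight:
  assumes sorted: "sorted_wrt (\<ge>) v" and addable: "addable v r" and "\<alpha> > 0"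
  shows "jack_prob \<alpha> (Suc (sum_list v)) (add_box v r) * down_weight \<alpha> (add_box v r) r
       = jack_prob \<alpha> (sum_list v) v * up_weight \<alpha> v r"
proof -
  define n where "n = sum_list v"
  define N where "N = length v"
  define K where "K = {..<N} - {r}"
  define z where "z = end_content \<alpha> v"
  define P1 where "P1 = (\<Prod>k\<in>K. hook_ratio_factor \<alpha> 1 v r k)"
  define P\<alpha> where "P\<alpha> = (\<Prod>k\<in>K. hook_ratio_factor \<alpha> \<alpha> v r k)"
  define Pup where "Pup = (\<Prod>k\<in>K. (z r - z k + 1) / (z r - z k))"
  have r: "r < N"
    using addable by (simp add: addable_def N_def)
  note ratio = hook_ratio_eq_prod_other_rows[OF r[unfolded N_def], of \<alpha>, folded N_def, folded K_def z_def]
  have "(z r + real N) * P1 > 0" "(z r + real N - 1 + \<alpha>) * P\<alpha> > 0"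
    using hook_ratio_pos[OF sorted addable \<open>\<alpha> > 0\<close>, of 1] hook_ratio_pos[OF sorted addable \<open>\<alpha> > 0\<close> \<open>\<alpha> > 0\<close>]
    by (simp_all add: ratio P1_def P\<alpha>_def)
  then have nonzero: "(z r + real N) * P1 \<noteq> 0" "(z r + real N - 1 + \<alpha>) * P\<alpha> \<noteq> 0"
    by (metis order_less_irrefl)+
  have down: "down_weight \<alpha> (add_box v r) r = (z r + real N - 1 + \<alpha>) * (P1 * P\<alpha> * Pup) / (\<alpha> * real (Suc n))"
    using down_weight_add_box[OF r[unfolded N_def], of \<alpha>] prod_hook_ratio_factors[OF assms]
    by (simp add: N_def n_def K_def z_def P1_def P\<alpha>_def Pup_def algebra_simps)
  have up: "up_weight \<alpha> v r = Pup / (z r + real N)"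
    by (simp add: up_weight_def Pup_def K_def N_def z_def)
  have hooks: "hook_prod \<alpha> 1 (add_box v r) = hook_prod \<alpha> 1 v * ((z r + real N) * P1)"
    "hook_prod \<alpha> \<alpha> (add_box v r) = hook_prod \<alpha> \<alpha> v * ((z r + real N - 1 + \<alpha>) * P\<alpha>)"
    using hook_prod_add_box[OF sorted addable \<open>\<alpha> > 0\<close>] \<open>\<alpha> > 0\<close> by (simp_all add: ratio P1_def P\<alpha>_def)
  have "hook_prod \<alpha> 1 v \<noteq> 0" "hook_prod \<alpha> \<alpha> v \<noteq> 0"
    using hook_prod_pos[of \<alpha>] \<open>\<alpha> > 0\<close> by (simp_all add: dual_order.strict_implies_not_eq)
  moreover have field: "a * a ^ n * (m * f) / (h1 * (x1 * p1) * (h\<alpha> * (x\<alpha> * p\<alpha>))) * (x\<alpha> * (p1 * p\<alpha> * q) / (a * m))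
      = a ^ n * f / (h1 * h\<alpha>) * (q / x1)"
    if "a \<noteq> 0" "m \<noteq> 0" "h1 \<noteq> 0" "h\<alpha> \<noteq> 0" "x1 * p1 \<noteq> 0" "x\<alpha> * p\<alpha> \<noteq> 0"
    for a m f h1 h\<alpha> x1 x\<alpha> p1 p\<alpha> q :: real
    using that by (simp add: field_simps)
  ultimately show ?thesis
    unfolding n_def[symmetric]
    unfolding jack_prob_eq_hook_prod hooks down up power_Suc fact_Suc
    using nonzero \<open>\<alpha> > 0\<close> by (intro field) auto
qed

lemma up_weight_eq_divided_diff_term:
  assumes "sorted_wrt (\<ge>) v" "\<alpha> > 0" "length v = Suc m" "v ! m = 0" "r < length v"
  shows "up_weight \<alpha> v r = poly (root_poly (\<lambda>k. end_content \<alpha> v k - 1) {..<m}) (end_content \<alpha> v r)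
    / (\<Prod>k\<in>{..<length v}-{r}. end_content \<alpha> v r - end_content \<alpha> v k)"
proof -
  let ?z = "end_content \<alpha> v"
  have "\<alpha> * real (v ! r) \<ge> 0" "real r < real (length v)"
    using assms(2,5) by simp_all
  then have "?z r + real (length v) > 0"
    unfolding end_content_def by linarith
  moreover have "(\<Prod>k\<in>{..<length v}-{r}. ?z r - ?z k + 1) = (\<Prod>k<length v. ?z r - ?z k + 1)"
    using assms(5) prod.remove[of "{..<length v}" r "\<lambda>k. ?z r - ?z k + 1"] by simp
  \<comment> \<open>the empty last row contributes the factor \<open>z r + length v\<close>\<close>
  moreover have "\<dots> = poly (root_poly (\<lambda>k. ?z k - 1) {..<m}) (?z r) * (?z r + real (length v))"
    using assms(3,4) by (simp add: poly_root_poly end_content_def algebra_simps)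
  ultimately show ?thesis
    by (simp add: up_weight_def prod_dividef)
qed

lemma up_weight_sums:
  assumes "sorted_wrt (\<ge>) v" "\<alpha> > 0" "length v = Suc (Suc m)" "v ! Suc m = 0"
  shows "(\<Sum>r<length v. up_weight \<alpha> v r) = 1"
    and "(\<Sum>r<length v. up_weight \<alpha> v r * end_content \<alpha> v r) = 0"
proof -
  let ?z = "end_content \<alpha> v"
  let ?N = "length v"
  let ?T = "root_poly (\<lambda>k. ?z k - 1) {..<Suc m}"
  have inj: "inj_on ?z {..<?N}"
    by (rule inj_on_end_content[OF assms(1,2)])
  have degree: "degree ?T = Suc m"
    by (simp add: degree_root_poly)
  have sums: "(\<Sum>r<?N. up_weight \<alpha> v r * f (?z r)) = divided_diff ?z ?N (\<lambda>x. f x * poly ?T x)" for f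
    by (simp add: divided_diff_def up_weight_eq_divided_diff_term[OF assms] mult_ac)
  have shift: "poly (pCons 0 ?T) = (\<lambda>x. x * poly ?T x)"
    by (simp add: fun_eq_iff)
  show "(\<Sum>r<?N. up_weight \<alpha> v r) = 1"
    using sums[of "\<lambda>_. 1"] assms(3) degree divided_diff_poly[OF inj, of ?T]
    by (simp add: coeff_root_poly_lessThan coeff_eq_0)
  have "(\<Sum>r<?N. up_weight \<alpha> v r * ?z r) = - (\<Sum>k<Suc m. ?z k - 1) + (\<Sum>k<Suc (Suc m). ?z k)"
    using sums[of "\<lambda>x. x"] assms(3) degree divided_diff_poly[OF inj, of "pCons 0 ?T"]
    by (simp add: shift coeff_root_poly_lessThan coeff_root_poly_sub1)
  also have "\<dots> = 0"
    using assms(4) by (simp add: sum_subtractf end_content_def)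
  finally show "(\<Sum>r<?N. up_weight \<alpha> v r * ?z r) = 0" .
qed

lemma down_weight_sum:
  assumes "sorted_wrt (\<ge>) w" "\<alpha> > 0" "length w \<ge> 2" "sum_list w > 0"
  shows "(\<Sum>s<length w. down_weight \<alpha> w s) = 1"
proof -
  let ?z = "end_content \<alpha> w"
  define N where "N = length w"
  have "(\<Sum>s<length w. down_weight \<alpha> w s)
      = (\<Sum>s<N. (?z s + real N - 1) * (\<Prod>k\<in>{..<N}-{s}. ?z s - ?z k - 1) / (\<Prod>k\<in>{..<N}-{s}. ?z s - ?z k))
        / (\<alpha> * real (sum_list w))"
    by (simp add: down_weight_def prod_dividef sum_divide_distrib N_def)
  also have "(\<Sum>s<N. (?z s + real N - 1) * (\<Prod>k\<in>{..<N}-{s}. ?z s - ?z k - 1) / (\<Prod>k\<in>{..<N}-{s}. ?z s - ?z k))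
      = (\<Sum>k<N. ?z k) + real N * (real N - 1) / 2"
    using divided_diff_shifted_prod[OF inj_on_end_content[OF assms(1,2)] assms(3)] by (simp add: N_def)
  also have "(\<Sum>k<N. ?z k) = \<alpha> * real (sum_list w) - real N * (real N - 1) / 2"
  proof -
    have "(\<Sum>k<N. real k) = real N * (real N - 1) / 2"
      by (induction N) (auto simp: field_simps)
    moreover have "(\<Sum>k<N. real (w ! k)) = real (sum_list w)"
      by (simp add: N_def sum_list_sum_nth atLeast0LessThan)
    ultimately show ?thesis
      by (simp add: end_content_def sum_subtractf sum_distrib_left[symmetric])
  qed
  finally show ?thesis
    using assms(2,4) by (simp del: sum_list_eq_0_iff)
qed

lemma up_weight_eq_0:
  assumes "sorted_wrt (\<ge>) v" "r < length v" "\<not> addable v r"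
  shows "up_weight \<alpha> v r = 0"
proof -
  have "r \<noteq> 0" "v ! (r - 1) = v ! r"
    using assms sorted_desc_nth_le[OF assms(1), of "r - 1" r] by (auto simp: addable_def)
  then have "end_content \<alpha> v r - end_content \<alpha> v (r - 1) + 1 = 0"
    by (simp add: end_content_def of_nat_diff)
  then have "(\<Prod>k\<in>{..<length v}-{r}. (end_content \<alpha> v r - end_content \<alpha> v k + 1) / (end_content \<alpha> v r - end_content \<alpha> v k)) = 0"
    using assms(2) \<open>r \<noteq> 0\<close> by (intro prod_zero bexI[of _ "r - 1"]) auto
  then show ?thesis
    by (simp add: up_weight_def)
qed

lemma down_weight_eq_0:
  assumes "sorted_wrt (\<ge>) w" "length w = Suc p" "w ! p = 0" "s < length w" "\<not> removable w s"
  shows "down_weight \<alpha> w s = 0"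
proof (cases "Suc s < length w")
  case True
  then have "w ! Suc s = w ! s"
    using assms(5) sorted_desc_nth_le[OF assms(1), of s "Suc s"] by (simp add: removable_def)
  then have "end_content \<alpha> w s - end_content \<alpha> w (Suc s) - 1 = 0"
    by (simp add: end_content_def)
  then have "(\<Prod>k\<in>{..<length w}-{s}. (end_content \<alpha> w s - end_content \<alpha> w k - 1) / (end_content \<alpha> w s - end_content \<alpha> w k)) = 0"
    using True by (intro prod_zero bexI[of _ "Suc s"]) auto
  then show ?thesis
    by (simp add: down_weight_def)
next
  case False
  then have "s = p"
    using assms(2,4) by simp
  then have "end_content \<alpha> w s + real (length w) - 1 = 0"
    using assms(2,3) by (simp add: end_content_def)
  then show ?thesis
    by (simp add: down_weight_def)
qed

section \<open>The growth recursion\<close>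

lemma sorted_add_box:
  assumes "sorted_wrt (\<ge>) v" "addable v r"
  shows "sorted_wrt (\<ge>) (add_box v r)"
  using assms unfolding sorted_desc_iff_nth_Suc addable_def
  by (auto simp: nth_list_update)

lemma sorted_remove_box:
  assumes "sorted_wrt (\<ge>) w" "removable w s"
  shows "sorted_wrt (\<ge>) (w[s := w ! s - 1])"
  unfolding sorted_desc_iff_nth_Suc
proof (intro allI impI)
  fix i assume i: "Suc i < length (w[s := w ! s - 1])"
  then have "w ! Suc i \<le> w ! i"
    using assms(1) unfolding sorted_desc_iff_nth_Suc by simp
  then show "w[s := w ! s - 1] ! Suc i \<le> w[s := w ! s - 1] ! i"
    using assms(2) i by (auto simp: removable_def nth_list_update)
qed

(* Partitions of n padded with zero rows to length N; for N > n the last row is empty and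
   provides the cell that starts a new row. *)
definition padded_partitions :: "nat \<Rightarrow> nat \<Rightarrow> nat list set" where
  "padded_partitions N n = {v. length v = N \<and> sorted_wrt (\<ge>) v \<and> sum_list v = n}"

lemma finite_padded_partitions: "finite (padded_partitions N n)"
proof (rule finite_subset)
  show "padded_partitions N n \<subseteq> {v. set v \<subseteq> {..n} \<and> length v = N}"
    by (auto simp: padded_partitions_def member_le_sum_list)
qed (rule finite_lists_length_eq, simp)

lemma remove_box_padded_partitions:
  assumes "w \<in> padded_partitions N (Suc n)" "removable w s"
  shows "w[s := w ! s - 1] \<in> padded_partitions N n" "addable (w[s := w ! s - 1]) s"
    "add_box (w[s := w ! s - 1]) s = w"
proof -
  have w: "length w = N" "sorted_wrt (\<ge>) w" "sum_list w = Suc n" "Suc s < N" "w ! Suc s < w ! s"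
    using assms by (auto simp: padded_partitions_def removable_def)
  have "s = 0 \<or> w ! s \<le> w ! (s - 1)"
    using sorted_desc_nth_le[OF w(2), of "s - 1" s] w(1,4) by auto
  then show "w[s := w ! s - 1] \<in> padded_partitions N n" "addable (w[s := w ! s - 1]) s"
    "add_box (w[s := w ! s - 1]) s = w"
    using w sorted_remove_box[OF w(2) assms(2)]
    by (auto simp: padded_partitions_def addable_def sum_list_update nth_list_update)
qed

lemma add_box_padded_partitions:
  assumes "Suc n < N" "v \<in> padded_partitions N n" "addable v r"
  shows "add_box v r \<in> padded_partitions N (Suc n)" "removable (add_box v r) r"
    "(add_box v r)[r := add_box v r ! r - 1] = v"
proof -
  have v: "length v = N" "sorted_wrt (\<ge>) v" "sum_list v = n" "r < N"
    using assms(2,3) by (auto simp: padded_partitions_def addable_def)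
  show new: "add_box v r \<in> padded_partitions N (Suc n)"
    using v sorted_add_box[OF v(2) assms(3)] by (simp add: padded_partitions_def sum_list_update)
  have "Suc r < N"
  proof (rule ccontr)
    assume "\<not> Suc r < N"
    then have "r = N - 1"
      using v(4) by simp
    moreover have "add_box v r ! (N - 1) = 0"
      using new assms(1) last_row_zero[of "add_box v r" "N - 1"] by (simp add: padded_partitions_def)
    ultimately show False
      using v(1,4) by simp
  qed
  moreover have "v ! Suc r \<le> v ! r"
    using sorted_desc_nth_le[OF v(2), of r "Suc r"] calculation v(1) by simp
  ultimately show "removable (add_box v r) r" "(add_box v r)[r := add_box v r ! r - 1] = v"
    using v by (auto simp: removable_def)
qed

lemma sum_removable_eq_sum_addable:
  assumes "Suc n < N"
  shows "(\<Sum>w\<in>padded_partitions N (Suc n). \<Sum>s | removable w s. F w s)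
       = (\<Sum>v\<in>padded_partitions N n. \<Sum>r | addable v r. F (add_box v r) r)"
proof -
  have "{s. removable w s} \<subseteq> {..<length w}" "{r. addable v r} \<subseteq> {..<length v}" for w v
    by (auto simp: removable_def addable_def)
  then have finite: "finite {s. removable w s}" "finite {r. addable v r}" for w v
    by (meson finite_lessThan finite_subset)+
  have "(\<Sum>w\<in>padded_partitions N (Suc n). \<Sum>s | removable w s. F w s)
      = (\<Sum>(w, s)\<in>Sigma (padded_partitions N (Suc n)) (\<lambda>w. {s. removable w s}). F w s)"
    by (rule sum.Sigma) (simp_all add: finite_padded_partitions finite)
  also have "\<dots> = (\<Sum>(v, r)\<in>Sigma (padded_partitions N n) (\<lambda>v. {r. addable v r}). F (add_box v r) r)"
  proof (rule sum.reindex_bij_witness[where i = "\<lambda>(v, r). (add_box v r, r)" and j = "\<lambda>(w, s). (w[s := w ! s - 1], s)"])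
    fix ws assume "ws \<in> Sigma (padded_partitions N (Suc n)) (\<lambda>w. {s. removable w s})"
    then obtain w s where "ws = (w, s)" "w \<in> padded_partitions N (Suc n)" "removable w s"
      by auto
    with remove_box_padded_partitions[of w N n s]
    show "(\<lambda>(v, r). (add_box v r, r)) ((\<lambda>(w, s). (w[s := w ! s - 1], s)) ws) = ws"
      "(\<lambda>(w, s). (w[s := w ! s - 1], s)) ws \<in> Sigma (padded_partitions N n) (\<lambda>v. {r. addable v r})"
      "(\<lambda>(v, r). F (add_box v r) r) ((\<lambda>(w, s). (w[s := w ! s - 1], s)) ws) = (\<lambda>(w, s). F w s) ws"
      by auto
  next
    fix vr assume "vr \<in> Sigma (padded_partitions N n) (\<lambda>v. {r. addable v r})"
    then obtain v r where "vr = (v, r)" "v \<in> padded_partitions N n" "addable v r"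
      by auto
    with add_box_padded_partitions[OF assms, of v r]
    show "(\<lambda>(w, s). (w[s := w ! s - 1], s)) ((\<lambda>(v, r). (add_box v r, r)) vr) = vr"
      "(\<lambda>(v, r). (add_box v r, r)) vr \<in> Sigma (padded_partitions N (Suc n)) (\<lambda>w. {s. removable w s})"
      by auto
  qed
  also have "\<dots> = (\<Sum>v\<in>padded_partitions N n. \<Sum>r | addable v r. F (add_box v r) r)"
    by (rule sum.Sigma[symmetric]) (simp_all add: finite_padded_partitions finite)
  finally show ?thesis .
qed

definition content_prod :: "real \<Rightarrow> real \<Rightarrow> nat list \<Rightarrow> real" where
  "content_prod \<alpha> u v = (\<Prod>x\<in>boxes v. u + content \<alpha> x)"

lemma content_prod_add_box:
  assumes "r < length v"
  shows "content_prod \<alpha> u (add_box v r) = content_prod \<alpha> u v * (u + end_content \<alpha> v r)"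
proof -
  have "boxes (add_box v r) = insert (r, v ! r) (boxes v)" "(r, v ! r) \<notin> boxes v"
    using assms by (auto simp: boxes_def nth_list_update less_Suc_eq split: if_splits)
  then show ?thesis
    by (simp add: content_prod_def finite_boxes Defs.content_def end_content_def mult.commute)
qed

lemma down_weight_sum_removable:
  assumes "w \<in> padded_partitions N (Suc n)" "Suc n < N" "\<alpha> > 0"
  shows "(\<Sum>s | removable w s. down_weight \<alpha> w s) = 1"
proof -
  define m where "m = N - 2"
  have N: "N = Suc (Suc m)"
    using assms(2) by (simp add: m_def)
  have w: "sorted_wrt (\<ge>) w" "length w = Suc (Suc m)" "sum_list w = Suc n"
    using assms(1) N by (auto simp: padded_partitions_def)
  then have last: "w ! Suc m = 0"
    using last_row_zero[of w "Suc m"] assms(2) N by simp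
  have "(\<Sum>s | removable w s. down_weight \<alpha> w s) = (\<Sum>s<length w. down_weight \<alpha> w s)"
    using down_weight_eq_0[OF w(1,2) last]
    by (intro sum.mono_neutral_left) (auto simp: removable_def)
  also have "\<dots> = 1"
    using down_weight_sum[OF w(1) assms(3)] w(2,3) by simp
  finally show ?thesis .
qed

lemma up_weight_sum_addable:
  assumes "v \<in> padded_partitions N n" "Suc n < N" "\<alpha> > 0"
  shows "(\<Sum>r | addable v r. up_weight \<alpha> v r * (u + end_content \<alpha> v r)) = u"
proof -
  define m where "m = N - 2"
  have N: "N = Suc (Suc m)"
    using assms(2) by (simp add: m_def)
  have v: "sorted_wrt (\<ge>) v" "length v = Suc (Suc m)" "sum_list v = n"
    using assms(1) N by (auto simp: padded_partitions_def)
  then have last: "v ! Suc m = 0"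
    using last_row_zero[of v "Suc m"] assms(2) N by simp
  have "(\<Sum>r | addable v r. up_weight \<alpha> v r * (u + end_content \<alpha> v r))
      = (\<Sum>r<length v. up_weight \<alpha> v r * (u + end_content \<alpha> v r))"
    using up_weight_eq_0[OF v(1)]
    by (intro sum.mono_neutral_left) (auto simp: addable_def)
  also have "\<dots> = u * (\<Sum>r<length v. up_weight \<alpha> v r) + (\<Sum>r<length v. up_weight \<alpha> v r * end_content \<alpha> v r)"
    by (simp add: algebra_simps sum.distrib sum_distrib_left)
  also have "\<dots> = u"
    using up_weight_sums[OF v(1) assms(3) v(2) last] by simp
  finally show ?thesis .
qed

lemma jack_prob_content_prod_add_box:
  assumes "sorted_wrt (\<ge>) v" "addable v r" "\<alpha> > 0"
  shows "jack_prob \<alpha> (Suc (sum_list v)) (add_box v r) * down_weight \<alpha> (add_box v r) r * content_prod \<alpha> u (add_box v r)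
       = jack_prob \<alpha> (sum_list v) v * content_prod \<alpha> u v * (up_weight \<alpha> v r * (u + end_content \<alpha> v r))"
  using jack_prob_add_box_down_weight[OF assms] content_prod_add_box[of r v \<alpha> u] assms(2)
  by (simp add: addable_def mult_ac)

lemma sum_padded_partitions_content_prod_Suc:
  assumes "\<alpha> > 0" "Suc n < N"
  shows "(\<Sum>w\<in>padded_partitions N (Suc n). jack_prob \<alpha> (Suc n) w * content_prod \<alpha> u w)
       = u * (\<Sum>v\<in>padded_partitions N n. jack_prob \<alpha> n v * content_prod \<alpha> u v)"
proof -
  define F where "F w s = jack_prob \<alpha> (Suc n) w * down_weight \<alpha> w s * content_prod \<alpha> u w" for w s
  have "(\<Sum>s | removable w s. F w s)
      = jack_prob \<alpha> (Suc n) w * (\<Sum>s | removable w s. down_weight \<alpha> w s) * content_prod \<alpha> u w" for w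
    by (simp add: F_def sum_distrib_left sum_distrib_right)
  then have "jack_prob \<alpha> (Suc n) w * content_prod \<alpha> u w = (\<Sum>s | removable w s. F w s)"
    if "w \<in> padded_partitions N (Suc n)" for w
    using down_weight_sum_removable[OF that assms(2,1)] by simp
  then have "(\<Sum>w\<in>padded_partitions N (Suc n). jack_prob \<alpha> (Suc n) w * content_prod \<alpha> u w)
      = (\<Sum>v\<in>padded_partitions N n. \<Sum>r | addable v r. F (add_box v r) r)"
    using sum_removable_eq_sum_addable[OF assms(2)] by simp
  also have "\<dots> = (\<Sum>v\<in>padded_partitions N n. jack_prob \<alpha> n v * content_prod \<alpha> u v *
      (\<Sum>r | addable v r. up_weight \<alpha> v r * (u + end_content \<alpha> v r)))"
    by (intro sum.cong refl)
       (auto simp: F_def padded_partitions_def sum_distrib_left jack_prob_content_prod_add_box[OF _ _ assms(1)])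
  also have "\<dots> = u * (\<Sum>v\<in>padded_partitions N n. jack_prob \<alpha> n v * content_prod \<alpha> u v)"
    using up_weight_sum_addable[OF _ assms(2,1)] by (simp add: sum_distrib_left mult_ac)
  finally show ?thesis .
qed

lemma boxes_append_zeros: "boxes (lam @ replicate k 0) = boxes lam"
  by (auto simp: boxes_def nth_append split: if_splits)

lemma jack_prob_append_zeros: "jack_prob \<alpha> n (lam @ replicate k 0) = jack_prob \<alpha> n lam"
  by (simp add: jack_prob_def boxes_append_zeros arm_def leg_def)

lemma content_prod_append_zeros: "content_prod \<alpha> u (lam @ replicate k 0) = content_prod \<alpha> u lam"
  by (simp add: content_prod_def boxes_append_zeros)

lemma is_partition_iff_sorted: "is_partition lam \<longleftrightarrow> sorted_wrt (\<ge>) lam \<and> (\<forall>p\<in>set lam. 0 < p)"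
  by (simp add: is_partition_def sorted_desc_iff_nth_Suc)

lemma length_le_sum_list: "\<forall>x\<in>set xs. 0 < x \<Longrightarrow> length xs \<le> sum_list (xs :: nat list)"
  by (induction xs) auto

lemma filter_pos_append_zeros:
  "sorted_wrt (\<ge>) (v :: nat list) \<Longrightarrow> filter ((<) 0) v @ replicate (length v - length (filter ((<) 0) v)) 0 = v"
proof (induction v)
  case (Cons a v)
  show ?case
  proof (cases "0 < a")
    case True
    then show ?thesis
      using Cons by (simp add: Suc_diff_le)
  next
    case False
    then have "\<forall>x\<in>set v. x = 0"
      using Cons.prems by auto
    then have "filter ((<) 0) v = []" "v = replicate (length v) 0"
      by (auto simp: filter_empty_conv intro: replicate_eqI)
    then show ?thesis
      using False by simp
  qed
qed simp

lemma sum_partitions_eq_sum_padded_partitions: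
  assumes "n \<le> N" and append_zeros: "\<And>lam k. g (lam @ replicate k 0) = g lam"
  shows "(\<Sum>lam\<in>partitions n. g lam) = (\<Sum>v\<in>padded_partitions N n. g v :: real)"
proof (rule sum.reindex_bij_witness[where i = "filter ((<) 0)" and j = "\<lambda>lam. lam @ replicate (N - length lam) 0"])
  fix lam assume "lam \<in> partitions n"
  then have lam: "sorted_wrt (\<ge>) lam" "\<forall>p\<in>set lam. 0 < p" "sum_list lam = n"
    by (auto simp: partitions_def is_partition_iff_sorted)
  then show "filter ((<) 0) (lam @ replicate (N - length lam) 0) = lam"
    by (simp add: filter_id_conv)
  have "length lam \<le> N"
    using length_le_sum_list[OF lam(2)] lam(3) assms(1) by simp
  then show "lam @ replicate (N - length lam) 0 \<in> padded_partitions N n"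
    using lam by (auto simp: padded_partitions_def sorted_wrt_append sorted_wrt_iff_nth_less[of _ "replicate _ _"])
  show "g (lam @ replicate (N - length lam) 0) = g lam"
    by (rule append_zeros)
next
  fix v assume "v \<in> padded_partitions N n"
  then have v: "length v = N" "sorted_wrt (\<ge>) v" "sum_list v = n"
    by (auto simp: padded_partitions_def)
  then show "filter ((<) 0) v @ replicate (N - length (filter ((<) 0) v)) 0 = v"
    using filter_pos_append_zeros[OF v(2)] v(1) by simp
  have "sum_list (filter ((<) 0) v) = sum_list v"
    by (induction v) auto
  then show "filter ((<) 0) v \<in> partitions n"
    using v sorted_wrt_filter[OF v(2)] by (simp add: partitions_def is_partition_iff_sorted)
qed

lemma partitions_0: "partitions 0 = {[]}"
proof -
  have "lam = []" if "\<forall>p\<in>set lam. 0 < p" "\<forall>p\<in>set lam. p = (0::nat)" for lam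
    using that by (cases lam) auto
  then show ?thesis
    by (auto simp: partitions_def is_partition_def)
qed

lemma jack_expect_content_prod:
  assumes "\<alpha> > 0"
  shows "jack_expect \<alpha> n (content_prod \<alpha> u) = u ^ n"
proof (induction n)
  case 0
  then show ?case
    by (simp add: jack_expect_def partitions_0 jack_prob_def content_prod_def boxes_def)
next
  case (Suc n)
  have padded: "jack_expect \<alpha> m (content_prod \<alpha> u)
      = (\<Sum>v\<in>padded_partitions (Suc (Suc n)) m. jack_prob \<alpha> m v * content_prod \<alpha> u v)" if "m \<le> Suc n" for m
    unfolding jack_expect_def using that
    by (intro sum_partitions_eq_sum_padded_partitions) (simp_all add: jack_prob_append_zeros content_prod_append_zeros)
  show ?case
    using sum_padded_partitions_content_prod_Suc[OF assms, of n "Suc (Suc n)" u] Suc.IH by (simp add: padded)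
qed

lemma prod_add_eq_sum_elementary:
  fixes c :: "'a \<Rightarrow> 'b::comm_ring_1"
  assumes "finite B"
  shows "(\<Prod>x\<in>B. u + c x) = (\<Sum>k\<le>card B. u ^ (card B - k) * (\<Sum>S | S \<subseteq> B \<and> card S = k. \<Prod>x\<in>S. c x))"
proof -
  have "(\<Prod>x\<in>B. u + c x) = (\<Sum>S\<in>Pow B. u ^ (card B - card S) * (\<Prod>x\<in>S. c x))"
    unfolding add.commute[of u] prod_add[OF assms]
    using assms by (intro sum.cong) (auto simp: card_Diff_subset finite_subset mult.commute)
  also have "\<dots> = (\<Sum>k\<le>card B. \<Sum>S | S \<in> Pow B \<and> card S = k. u ^ (card B - card S) * (\<Prod>x\<in>S. c x))"
    using assms by (intro sum.group[symmetric]) (auto intro: card_mono)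
  also have "\<dots> = (\<Sum>k\<le>card B. u ^ (card B - k) * (\<Sum>S | S \<subseteq> B \<and> card S = k. \<Prod>x\<in>S. c x))"
    by (simp add: sum_distrib_left)
  finally show ?thesis .
qed

lemma jack_expect_content_prod_eq_sum_elem_content:
  "jack_expect \<alpha> n (content_prod \<alpha> u) = (\<Sum>k\<le>n. u ^ (n - k) * jack_expect \<alpha> n (elem_content \<alpha> k))"
proof -
  have "content_prod \<alpha> u lam = (\<Sum>k\<le>n. u ^ (n - k) * elem_content \<alpha> k lam)" if "lam \<in> partitions n" for lam
    using that prod_add_eq_sum_elementary[OF finite_boxes, of u "content \<alpha>" lam]
    by (simp add: content_prod_def elem_content_def partitions_def card_boxes)
  then show ?thesis
    unfolding jack_expect_def sum_distrib_left
    by (subst sum.swap) (simp add: sum_distrib_left mult_ac)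
qed

lemma jack_expect_elem_content:
  assumes "\<alpha> > 0" "1 \<le> r" "r \<le> n"
  shows "jack_expect \<alpha> n (elem_content \<alpha> r) = 0"
proof -
  define e where "e k = jack_expect \<alpha> n (elem_content \<alpha> (n - k))" for k
  have "(\<Sum>k\<le>n. e k * u ^ k) = (\<Sum>k\<le>n. (if k = n then 1 else 0) * u ^ k)" for u
  proof -
    have "(\<Sum>k\<le>n. e k * u ^ k) = (\<Sum>k\<le>n. u ^ (n - k) * jack_expect \<alpha> n (elem_content \<alpha> k))"
      unfolding e_def by (rule sum.reindex_bij_witness[where i = "\<lambda>k. n - k" and j = "\<lambda>k. n - k"]) auto
    also have "\<dots> = u ^ n"
      using jack_expect_content_prod[OF assms(1)] jack_expect_content_prod_eq_sum_elem_content by simp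
    also have "\<dots> = (\<Sum>k\<le>n. (if k = n then 1 else 0) * u ^ k)"
      by (simp add: if_distrib[of "\<lambda>x. x * _"] cong: if_cong)
    finally show ?thesis .
  qed
  then have "e (n - r) = 0"
    using assms(2,3) polyfun_eq_coeffs[where n = n and c = e and d = "\<lambda>k. if k = n then 1 else 0"] by auto
  then show ?thesis
    using assms(3) by (simp add: e_def)
qed

theorem lemma7:
  fixes \<alpha> :: real and n :: nat
  assumes "\<alpha> > 0"
  shows "(\<forall>m::nat. m \<ge> 1 \<longrightarrow>
            jack_expect \<alpha> n (\<lambda>lam. \<Prod>x\<in>boxes lam. real m + content \<alpha> x) = real m ^ n)
       \<and> (\<forall>r::nat. 1 \<le> r \<and> r \<le> n \<longrightarrow> jack_expect \<alpha> n (elem_content \<alpha> r) = 0)"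
  using jack_expect_content_prod[OF assms] jack_expect_elem_content[OF assms]
  by (simp add: content_prod_def[abs_def])

end
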